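(* Let $d\ge 1$, let $x\sim\mathcal N(0,\Sigma)$ on $\mathbb R^d$ with $\Sigma=\mathrm{diag}(\sigma_1^2,\ldots,\sigma_d^2)$ and $\sigma_1^2>\sigma_2^2>\cdots>\sigma_d^2>0$, let $\varepsilon\in(0,1)$, $R>0$ and $T_{\mathrm{wu}}\ge 0$. For $j=1,\dots,d$ and $T\ge0$ let $$g_j(T)=\Bigl(1+\tfrac{1-\varepsilon^2}{\varepsilon^2}\,e^{-4\sigma_j^2 T}\Bigr)^{-1}$$ (the activation $u_jv_j$ of mode $j$ at time $T$ of the plain-autoencoder flow below started from $u_j(0)=v_j(0)=\varepsilon$). Define $$m^{\mathrm{wu}}(T_{\mathrm{wu}},R):=\max\Bigl\{m\in\{1,\dots,d\}:\ R>\tfrac12\sum_{i=1}^{m-1}\log_2\frac{\sigma_i^2\,g_i(T_{\mathrm{wu}})}{\sigma_m^2\,g_m(T_{\mathrm{wu}})}\Bigr\}.$$ Consider the following two-phase training (warm-up then RD-AE) of the diagonal linear model $W_1=\mathrm{diag}(u_1,\dots,u_d)$, $W_2=\mathrm{diag}(v_1,\dots,v_d)$: on $[0,T_{\mathrm{wu}}]$ run the plain-autoencoder flow from $u_j(0)=v_j(0)=\varepsilon$, and for $t\ge T_{\mathrm{wu}}$ run the RD-AE flow at rate $R$ with commitment weight $\beta=1$ (both flows defined in the context). Then at convergence at most $m^{\mathrm{wu}}$ modes remain active, and the limiting reconstruction loss satisfies $$L_{\mathrm{rec}}^{\infty}\;\ge\; m^{\mathrm{wu}}\,\delta_{m^{\mathrm{wu}}}(R)+\sum_{j>m^{\mathrm{wu}}}\sigma_j^2,\qquad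 \delta_m(R):=\Bigl(\prod_{i=1}^m\sigma_i^2\Bigr)^{1/m}2^{-2R/m}.$$
   Context: Plain-autoencoder flow (per mode $j$): $\dot u_j=2\sigma_j^2 v_j(1-u_jv_j)$, $\dot v_j=2\sigma_j^2 u_j(1-u_jv_j)$. RD-AE channel at rate $R$ (bits): given the current parameters, the latent coordinates $z_j=u_jx_j$ have variances $\lambda_j=u_j^2\sigma_j^2$. The water level $D^\star=D^\star(\lambda_1,\dots,\lambda_d;R)$ is the unique solution of $\sum_{j}\tfrac12\log_2^+(\lambda_j/D^\star)=R$ (where $\log_2^+ y=\max(\log_2 y,0)$). Set $D_j=\min(\lambda_j,D^\star)$, $c_j=1-D_j/\lambda_j$, $\tau_j^2=c_jD^\star$. Mode $j$ is called active if $\lambda_j>D^\star$ and inactive otherwise (then $c_j=\tau_j^2=0$). This corresponds to the rate-distortion-optimal Gaussian channel $z_{q,j}\mid z_j\sim\mathcal N(c_jz_j,\tau_j^2)$ minimizing $\mathbb E\|z-z_q\|^2$ subject to $I(z;z_q)\le R$. RD-AE flow with commitment weight $\beta$ (channel parameters $c_j,D_j$ recomputed from the current $\lambda_j$ at every time): $\dot u_j=2\sigma_j^2 v_j(1-c_ju_jv_j)-\dfrac{2\beta D_j}{u_j}$, $\dot v_j=2\sigma_j^2c_ju_j(1-u_jv_j)$. Reconstruction loss: $L_{\mathrm{rec}}(u,v)=\sum_{j=1}^d\bigl[\sigma_j^2(1-c_ju_jv_j)^2+v_j^2\tau_j^2\bigr]$ (the expected value of $\|x-W_2z_q\|^2$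 through this channel), and $L_{\mathrm{rec}}^\infty$ denotes its limit as $t\to\infty$ along the two-phase trajectory. *)

theory Defs
  imports "HOL-Analysis.Analysis"
begin

text \<open>Conventions: modes are indexed by j in {1..d}; s j denotes the variance sigma_j^2.
  Parameters are u, v :: nat => real (only indices 1..d matter); a trajectory is
  a function of time real => nat => real.\<close>

definition log2p :: "real \<Rightarrow> real" where
  "log2p y = max (log 2 y) 0"

definition lat_var :: "(nat \<Rightarrow> real) \<Rightarrow> (nat \<Rightarrow> real) \<Rightarrow> nat \<Rightarrow> real" where
  "lat_var s u j = (u j)^2 * s j"

definition water_level :: "nat \<Rightarrow> (nat \<Rightarrow> real) \<Rightarrow> real \<Rightarrow> real" where
  "water_level d lam R = (THE D. D > 0 \<and> (\<Sum>j=1..d. log2p (lam j / D) / 2) = R)"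

definition active :: "nat \<Rightarrow> (nat \<Rightarrow> real) \<Rightarrow> real \<Rightarrow> nat \<Rightarrow> bool" where
  "active d lam R j \<longleftrightarrow> lam j > water_level d lam R"

definition chD :: "nat \<Rightarrow> (nat \<Rightarrow> real) \<Rightarrow> real \<Rightarrow> nat \<Rightarrow> real" where
  "chD d lam R j = min (lam j) (water_level d lam R)"

definition chc :: "nat \<Rightarrow> (nat \<Rightarrow> real) \<Rightarrow> real \<Rightarrow> nat \<Rightarrow> real" where
  "chc d lam R j = (if active d lam R j then 1 - chD d lam R j / lam j else 0)"

definition chtau2 :: "nat \<Rightarrow> (nat \<Rightarrow> real) \<Rightarrow> real \<Rightarrow> nat \<Rightarrow> real" where
  "chtau2 d lam R j = chc d lam R j * water_level d lam R"

definition pae_du :: "(nat \<Rightarrow> real) \<Rightarrow> (nat \<Rightarrow> real) \<Rightarrow> (nat \<Rightarrow> real) \<Rightarrow> nat \<Rightarrow> real" where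
  "pae_du s u v j = 2 * s j * v j * (1 - u j * v j)"

definition pae_dv :: "(nat \<Rightarrow> real) \<Rightarrow> (nat \<Rightarrow> real) \<Rightarrow> (nat \<Rightarrow> real) \<Rightarrow> nat \<Rightarrow> real" where
  "pae_dv s u v j = 2 * s j * u j * (1 - u j * v j)"

definition rd_du :: "nat \<Rightarrow> (nat \<Rightarrow> real) \<Rightarrow> real \<Rightarrow> real \<Rightarrow> (nat \<Rightarrow> real) \<Rightarrow> (nat \<Rightarrow> real) \<Rightarrow> nat \<Rightarrow> real" where
  "rd_du d s R \<beta> u v j =
     2 * s j * v j * (1 - chc d (lat_var s u) R j * u j * v j)
     - 2 * \<beta> * chD d (lat_var s u) R j / u j"

definition rd_dv :: "nat \<Rightarrow> (nat \<Rightarrow> real) \<Rightarrow> real \<Rightarrow> (nat \<Rightarrow> real) \<Rightarrow> (nat \<Rightarrow> real) \<Rightarrow> nat \<Rightarrow> real" where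
  "rd_dv d s R u v j = 2 * s j * chc d (lat_var s u) R j * u j * (1 - u j * v j)"

definition Lrec :: "nat \<Rightarrow> (nat \<Rightarrow> real) \<Rightarrow> real \<Rightarrow> (nat \<Rightarrow> real) \<Rightarrow> (nat \<Rightarrow> real) \<Rightarrow> real" where
  "Lrec d s R u v = (\<Sum>j=1..d. s j * (1 - chc d (lat_var s u) R j * u j * v j)^2
                        + (v j)^2 * chtau2 d (lat_var s u) R j)"

definition gact :: "real \<Rightarrow> (nat \<Rightarrow> real) \<Rightarrow> real \<Rightarrow> nat \<Rightarrow> real" where
  "gact \<epsilon> s T j = 1 / (1 + (1 - \<epsilon>^2) / \<epsilon>^2 * exp (- 4 * s j * T))"

definition m_wu :: "nat \<Rightarrow> (nat \<Rightarrow> real) \<Rightarrow> real \<Rightarrow> real \<Rightarrow> real \<Rightarrow> nat" where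
  "m_wu d s \<epsilon> Twu R = Max {m \<in> {1..d}.
      R > 1/2 * (\<Sum>i=1..m-1. log 2 ((s i * gact \<epsilon> s Twu i) / (s m * gact \<epsilon> s Twu m)))}"

definition delta :: "(nat \<Rightarrow> real) \<Rightarrow> nat \<Rightarrow> real \<Rightarrow> real" where
  "delta s m R = (\<Prod>i=1..m. s i) powr (1 / real m) * 2 powr (- 2 * R / real m)"

end

theory Submission
  imports Defs
begin

(* Both flows keep every mode balanced (u_j = v_j, by Gronwall applied to u_j - v_j), so the
   activation w_j = u_j^2 obeys the logistic equation w' = 4 sigma_j^2 c_j w (1 - w): during the
   warm-up c_j = 1 and w_j(T_wu) = g_j, afterwards w_j only grows. Hence all latent variances
   lambda_j, and with them the water level D, increase. Since c_j lambda_j = max (lambda_j - D) 0,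
   a mode that is inactive at T_wu satisfies 0 <= lambda_j' <= 4 sigma_j^2 (lambda_j - lambda_j(T_wu))
   and stays frozen below D; the definition of m_wu makes every mode j > m_wu inactive at T_wu.
   Finally, the loss of a balanced mode is at least sigma_j^2 D_j / lambda_j; these ratios equal 1
   on inactive modes and multiply to 2^(-2R) on the others, so AM-GM gives the bound. *)

section \<open>Comparison principles for scalar flows\<close>

lemma DERIV_within_imp_continuous_on:
  fixes f f' :: "real \<Rightarrow> real"
  assumes "\<And>t. t \<in> S \<Longrightarrow> (f has_real_derivative f' t) (at t within S)"
  shows "continuous_on S f"
  using assms by (meson DERIV_continuous continuous_on_eq_continuous_within)

lemma DERIV_within_nonneg_imp_le:
  fixes f f' :: "real \<Rightarrow> real"
  assumes "x \<le> y" and "{x..y} \<subseteq> S"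
    and deriv: "\<And>t. t \<in> {x..y} \<Longrightarrow> (f has_real_derivative f' t) (at t within S)"
    and nonneg: "\<And>t. t \<in> {x..y} \<Longrightarrow> 0 \<le> f' t"
  shows "f x \<le> f y"
proof -
  have deriv': "(f has_real_derivative f' t) (at t within {x..y})" if "t \<in> {x..y}" for t
    using DERIV_subset[OF deriv[OF that] \<open>{x..y} \<subseteq> S\<close>] .
  show ?thesis
  proof (rule DERIV_nonneg_imp_increasing_open[OF \<open>x \<le> y\<close>])
    fix t assume "x < t" "t < y"
    then show "\<exists>l. (f has_real_derivative l) (at t) \<and> 0 \<le> l"
      using deriv'[of t] nonneg[of t] by (auto simp: at_within_Icc_at)
  next
    show "continuous_on {x..y} f"
      using deriv' by (rule DERIV_within_imp_continuous_on)
  qed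
qed

lemma DERIV_within_nonpos_imp_ge:
  fixes f f' :: "real \<Rightarrow> real"
  assumes "x \<le> y" and "{x..y} \<subseteq> S"
    and "\<And>t. t \<in> {x..y} \<Longrightarrow> (f has_real_derivative f' t) (at t within S)"
    and "\<And>t. t \<in> {x..y} \<Longrightarrow> f' t \<le> 0"
  shows "f y \<le> f x"
proof -
  have "- f x \<le> - f y"
    by (rule DERIV_within_nonneg_imp_le[where f = "\<lambda>t. - f t" and f' = "\<lambda>t. - f' t", OF assms(1,2)])
      (use assms(3,4) in \<open>auto intro: DERIV_minus\<close>)
  then show ?thesis by simp
qed

text \<open>Gronwall in its uniqueness form: \<open>h\<^sup>2 exp (-2Kt)\<close> decreases and \<open>h\<^sup>2 exp (2Kt)\<close>
  increases, so a zero of \<open>h\<close> propagates in both directions.\<close>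
lemma deriv_linearly_bounded_vanishes:
  fixes h h' :: "real \<Rightarrow> real"
  assumes deriv: "\<And>t. t \<in> {a..b} \<Longrightarrow> (h has_real_derivative h' t) (at t within {a..b})"
    and bound: "\<And>t. t \<in> {a..b} \<Longrightarrow> \<bar>h' t\<bar> \<le> K * \<bar>h t\<bar>"
    and "t0 \<in> {a..b}" "h t0 = 0" "t \<in> {a..b}"
  shows "h t = 0"
proof -
  have prod_bound: "h x * h' x - K * (h x)\<^sup>2 \<le> 0" "0 \<le> h x * h' x + K * (h x)\<^sup>2"
    if "x \<in> {a..b}" for x
  proof -
    have "\<bar>h x * h' x\<bar> \<le> K * (h x)\<^sup>2"
      using mult_left_mono[OF bound[OF that], of "\<bar>h x\<bar>"]
      by (simp add: abs_mult power2_eq_square mult_ac)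
    then show "h x * h' x - K * (h x)\<^sup>2 \<le> 0" "0 \<le> h x * h' x + K * (h x)\<^sup>2"
      by (simp_all add: abs_le_iff)
  qed
  define q where "q k x = (h x)\<^sup>2 * exp (k * x)" for k x
  have deriv_q: "(q k has_real_derivative 2 * exp (k * x) * (h x * h' x + k / 2 * (h x)\<^sup>2))
      (at x within {a..b})" if "x \<in> {a..b}" for k x
    unfolding q_def using deriv[OF that]
    by (auto intro!: derivative_eq_intros simp: algebra_simps power2_eq_square)
  have "q (- 2 * K) t \<le> q (- 2 * K) t0 \<or> q (2 * K) t \<le> q (2 * K) t0"
  proof (cases "t0 \<le> t")
    case True
    have "q (- 2 * K) t \<le> q (- 2 * K) t0"
      by (rule DERIV_within_nonpos_imp_ge[OF True _ deriv_q])
        (use assms prod_bound in \<open>auto simp: mult_nonneg_nonpos\<close>)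
    then show ?thesis ..
  next
    case False
    have "q (2 * K) t \<le> q (2 * K) t0"
      by (rule DERIV_within_nonneg_imp_le[OF _ _ deriv_q])
        (use assms prod_bound False in auto)
    then show ?thesis ..
  qed
  then have "(h t)\<^sup>2 \<le> 0"
    using \<open>h t0 = 0\<close> by (auto simp: q_def mult_le_0_iff)
  then show ?thesis by simp
qed

lemma deriv_linearly_bounded_pos:
  fixes h h' :: "real \<Rightarrow> real"
  assumes deriv: "\<And>t. t \<in> {a..b} \<Longrightarrow> (h has_real_derivative h' t) (at t within {a..b})"
    and bound: "\<And>t. t \<in> {a..b} \<Longrightarrow> \<bar>h' t\<bar> \<le> K * \<bar>h t\<bar>"
    and "0 < h a" "t \<in> {a..b}"
  shows "0 < h t"
proof (rule ccontr)
  assume "\<not> 0 < h t"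
  have "continuous_on {a..t} h"
    using DERIV_within_imp_continuous_on[OF deriv]
    by (rule continuous_on_subset) (use \<open>t \<in> {a..b}\<close> in auto)
  then obtain y where "y \<in> {a..t}" "h y = 0"
    using IVT2'[of h t 0 a] \<open>0 < h a\<close> \<open>\<not> 0 < h t\<close> \<open>t \<in> {a..b}\<close> by auto
  then have "h a = 0"
    using deriv_linearly_bounded_vanishes[OF deriv bound, of y a] \<open>t \<in> {a..b}\<close> by auto
  with \<open>0 < h a\<close> show False by simp
qed

lemma logistic_flow_invariant:
  fixes W \<kappa> :: "real \<Rightarrow> real"
  assumes deriv: "\<And>t. t \<in> {a..b} \<Longrightarrow>
      (W has_real_derivative \<kappa> t * W t * (1 - W t)) (at t within {a..b})"
    and rate: "\<And>t. t \<in> {a..b} \<Longrightarrow> 0 \<le> \<kappa> t \<and> \<kappa> t \<le> K"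
    and "0 < W a" "W a < 1" "t \<in> {a..b}"
  shows "0 < W t" and "W t < 1" and "W a \<le> W t"
proof -
  obtain B where B: "\<And>t. t \<in> {a..b} \<Longrightarrow> \<bar>W t\<bar> \<le> B"
    using continuous_on_compact_bound[OF compact_Icc DERIV_within_imp_continuous_on[OF deriv]]
    by (metis real_norm_def)
  have flow_bound: "\<bar>\<kappa> y * W y * (1 - W y)\<bar> \<le> K * (1 + B) * \<bar>W y\<bar>"
    "\<bar>\<kappa> y * W y * (1 - W y)\<bar> \<le> K * B * \<bar>1 - W y\<bar>" if "y \<in> {a..b}" for y
  proof -
    have "\<bar>\<kappa> y\<bar> \<le> K" "\<bar>1 - W y\<bar> \<le> 1 + B" "\<bar>W y\<bar> \<le> B"
      using rate[OF that] B[OF that] by auto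
    then have "\<bar>\<kappa> y\<bar> * \<bar>1 - W y\<bar> \<le> K * (1 + B)" "\<bar>\<kappa> y\<bar> * \<bar>W y\<bar> \<le> K * B"
      by (simp_all add: mult_mono)
    moreover have "\<bar>\<kappa> y * W y * (1 - W y)\<bar> = \<bar>\<kappa> y\<bar> * \<bar>1 - W y\<bar> * \<bar>W y\<bar>"
      and "\<bar>\<kappa> y * W y * (1 - W y)\<bar> = \<bar>\<kappa> y\<bar> * \<bar>W y\<bar> * \<bar>1 - W y\<bar>"
      by (simp_all add: abs_mult)
    ultimately show "\<bar>\<kappa> y * W y * (1 - W y)\<bar> \<le> K * (1 + B) * \<bar>W y\<bar>"
      and "\<bar>\<kappa> y * W y * (1 - W y)\<bar> \<le> K * B * \<bar>1 - W y\<bar>"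
      by (metis abs_ge_zero mult_right_mono)+
  qed
  have pos: "0 < W x" if "x \<in> {a..b}" for x
    by (rule deriv_linearly_bounded_pos[OF deriv flow_bound(1) \<open>0 < W a\<close> that])
  have below_one: "0 < 1 - W x" if "x \<in> {a..b}" for x
  proof (rule deriv_linearly_bounded_pos[where K = "K * B", OF _ _ _ that])
    show "((\<lambda>t. 1 - W t) has_real_derivative - (\<kappa> y * W y * (1 - W y))) (at y within {a..b})"
      if "y \<in> {a..b}" for y
      using deriv[OF that] by (auto intro!: derivative_eq_intros)
  qed (use flow_bound(2) \<open>W a < 1\<close> in auto)
  then show "W t < 1" using \<open>t \<in> {a..b}\<close> by simp
  show "0 < W t" using pos \<open>t \<in> {a..b}\<close> .
  have "0 \<le> \<kappa> x * W x * (1 - W x)" if "x \<in> {a..b}" for x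
    using rate[OF that] pos[OF that] below_one[OF that] by simp
  then show "W a \<le> W t"
    by (intro DERIV_within_nonneg_imp_le[OF _ _ deriv]) (use \<open>t \<in> {a..b}\<close> in auto)
qed

lemma logistic_flow_solution:
  fixes W :: "real \<Rightarrow> real"
  assumes deriv: "\<And>t. t \<in> {0..T} \<Longrightarrow> (W has_real_derivative r * W t * (1 - W t)) (at t within {0..T})"
    and "0 \<le> r" "0 < W 0" "W 0 < 1" "0 \<le> T"
  shows "W T = 1 / (1 + (1 - W 0) / W 0 * exp (- r * T))"
proof -
  have pos: "0 < W t" if "t \<in> {0..T}" for t
    using logistic_flow_invariant(1)[where \<kappa> = "\<lambda>_. r" and K = r, OF deriv] assms that by auto
  define G where "G t = (1 / W t - 1) * exp (r * t)" for t
  have "(G has_real_derivative 0) (at t within {0..T})" if "t \<in> {0..T}" for t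
  proof -
    have "(G has_real_derivative
        - (r * W t * (1 - W t)) / (W t)\<^sup>2 * exp (r * t) + (1 / W t - 1) * (exp (r * t) * r))
        (at t within {0..T})"
      unfolding G_def using deriv[OF that] pos[OF that]
      by (auto intro!: derivative_eq_intros simp: power2_eq_square)
    moreover have "- (r * W t * (1 - W t)) / (W t)\<^sup>2 * exp (r * t) + (1 / W t - 1) * (exp (r * t) * r) = 0"
      using pos[OF that] by (simp add: field_simps power2_eq_square)
    ultimately show ?thesis by simp
  qed
  then obtain c where "\<forall>t\<in>{0..T}. G t = c"
    using has_field_derivative_zero_constant[of "{0..T}" G] by auto
  then have "G T = G 0" using \<open>0 \<le> T\<close> by auto
  then have "1 / W T = 1 + (1 - W 0) / W 0 * exp (- r * T)"
    using pos[of 0] \<open>0 \<le> T\<close> by (simp add: G_def exp_minus field_simps)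
  then show ?thesis by (metis div_by_1 divide_divide_eq_right mult_1)
qed

section \<open>Balanced modes and the warm-up phase\<close>

text \<open>The plain autoencoder flow is the case \<open>C = 1\<close>; by \<open>rd_du_eq\<close> the RD-AE flow with unit
  commitment weight is the case \<open>C = c\<^sub>j\<close>.\<close>
lemma balanced_flow:
  fixes U V C :: "real \<Rightarrow> real"
  assumes dU: "\<And>t. t \<in> {a..b} \<Longrightarrow> (U has_real_derivative
      2 * \<sigma> * V t * (1 - C t * U t * V t) - 2 * \<sigma> * U t * (1 - C t)) (at t within {a..b})"
    and dV: "\<And>t. t \<in> {a..b} \<Longrightarrow>
      (V has_real_derivative 2 * \<sigma> * C t * U t * (1 - U t * V t)) (at t within {a..b})"
    and C: "\<And>t. t \<in> {a..b} \<Longrightarrow> 0 \<le> C t \<and> C t \<le> 1"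
    and "0 \<le> \<sigma>" "U a = V a" "t \<in> {a..b}"
  shows "U t = V t"
    and "((\<lambda>\<tau>. (U \<tau>)\<^sup>2) has_real_derivative 4 * \<sigma> * C t * (U t)\<^sup>2 * (1 - (U t)\<^sup>2))
      (at t within {a..b})"
proof -
  obtain B where B: "\<And>t. t \<in> {a..b} \<Longrightarrow> \<bar>U t * V t\<bar> \<le> B"
    using continuous_on_compact_bound[OF compact_Icc continuous_on_mult[OF
        DERIV_within_imp_continuous_on[OF dU] DERIV_within_imp_continuous_on[OF dV]]]
    by (metis real_norm_def)
  have balanced: "U x = V x" if "x \<in> {a..b}" for x
  proof -
    have "U x - V x = 0"
    proof (rule deriv_linearly_bounded_vanishes[OF _ _ _ _ that])
      fix y assume y: "y \<in> {a..b}"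
      show "((\<lambda>t. U t - V t) has_real_derivative
          - 2 * \<sigma> * (1 - C y * (U y * V y)) * (U y - V y)) (at y within {a..b})"
        using DERIV_diff[OF dU[OF y] dV[OF y]] by (simp add: algebra_simps)
      have "\<bar>C y * (U y * V y)\<bar> \<le> B"
        using C[OF y] B[OF y] mult_left_le_one_le[of "\<bar>U y * V y\<bar>" "C y"]
        by (simp add: abs_mult)
      then have "\<bar>1 - C y * (U y * V y)\<bar> \<le> 1 + B"
        using abs_triangle_ineq4[of 1 "C y * (U y * V y)"] by simp
      then have "\<bar>- 2 * \<sigma> * (1 - C y * (U y * V y))\<bar> \<le> 2 * \<sigma> * (1 + B)"
        using \<open>0 \<le> \<sigma>\<close> by (simp add: abs_mult mult_left_mono)
      then show "\<bar>- 2 * \<sigma> * (1 - C y * (U y * V y)) * (U y - V y)\<bar>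
          \<le> 2 * \<sigma> * (1 + B) * \<bar>U y - V y\<bar>"
        by (simp add: abs_mult mult_right_mono)
    qed (use \<open>U a = V a\<close> \<open>t \<in> {a..b}\<close> in auto)
    then show ?thesis by simp
  qed
  then show "U t = V t" using \<open>t \<in> {a..b}\<close> .
  have "2 * \<sigma> * V t * (1 - C t * U t * V t) - 2 * \<sigma> * U t * (1 - C t)
      = 2 * \<sigma> * C t * U t * (1 - (U t)\<^sup>2)"
    using balanced[OF \<open>t \<in> {a..b}\<close>] by (simp add: algebra_simps power2_eq_square)
  then have "(U has_real_derivative 2 * \<sigma> * C t * U t * (1 - (U t)\<^sup>2)) (at t within {a..b})"
    using dU[OF \<open>t \<in> {a..b}\<close>] by simp
  then show "((\<lambda>\<tau>. (U \<tau>)\<^sup>2) has_real_derivative 4 * \<sigma> * C t * (U t)\<^sup>2 * (1 - (U t)\<^sup>2))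
      (at t within {a..b})"
    by (auto intro!: derivative_eq_intros simp: algebra_simps power2_eq_square)
qed

lemma plain_ae_warm_up:
  fixes u v :: "real \<Rightarrow> nat \<Rightarrow> real"
  assumes du: "\<And>t. t \<in> {0..T} \<Longrightarrow>
      ((\<lambda>\<tau>. u \<tau> j) has_real_derivative pae_du s (u t) (v t) j) (at t within {0..T})"
    and dv: "\<And>t. t \<in> {0..T} \<Longrightarrow>
      ((\<lambda>\<tau>. v \<tau> j) has_real_derivative pae_dv s (u t) (v t) j) (at t within {0..T})"
    and "u 0 j = \<epsilon>" "v 0 j = \<epsilon>" "0 < \<epsilon>" "\<epsilon> < 1" "0 \<le> s j" "0 \<le> T"
  shows "v T j = u T j" and "(u T j)\<^sup>2 = gact \<epsilon> s T j"
proof -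
  note flow = balanced_flow[where U = "\<lambda>\<tau>. u \<tau> j" and V = "\<lambda>\<tau>. v \<tau> j" and C = "\<lambda>_. 1"
      and \<sigma> = "s j" and a = 0 and b = T]
  have du': "((\<lambda>\<tau>. u \<tau> j) has_real_derivative
      2 * s j * v t j * (1 - 1 * u t j * v t j) - 2 * s j * u t j * (1 - 1)) (at t within {0..T})"
    if "t \<in> {0..T}" for t
    using du[OF that] by (simp add: pae_du_def)
  have dv': "((\<lambda>\<tau>. v \<tau> j) has_real_derivative 2 * s j * 1 * u t j * (1 - u t j * v t j))
      (at t within {0..T})" if "t \<in> {0..T}" for t
    using dv[OF that] by (simp add: pae_dv_def)
  show "v T j = u T j"
    using flow(1)[OF du' dv'] assms by simp
  have "((\<lambda>\<tau>. (u \<tau> j)\<^sup>2) has_real_derivative 4 * s j * (u t j)\<^sup>2 * (1 - (u t j)\<^sup>2))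
      (at t within {0..T})" if "t \<in> {0..T}" for t
    using flow(2)[OF du' dv' _ _ _ that] assms by simp
  then have "(u T j)\<^sup>2 = 1 / (1 + (1 - (u 0 j)\<^sup>2) / (u 0 j)\<^sup>2 * exp (- (4 * s j) * T))"
    using assms by (intro logistic_flow_solution[where W = "\<lambda>\<tau>. (u \<tau> j)\<^sup>2"])
      (auto simp: power_less_one_iff)
  then show "(u T j)\<^sup>2 = gact \<epsilon> s T j"
    using assms by (simp add: gact_def)
qed

lemma gact_bounds:
  assumes "0 < \<epsilon>" "\<epsilon> < 1"
  shows "0 < gact \<epsilon> s T j" and "gact \<epsilon> s T j < 1"
proof -
  have "0 < (1 - \<epsilon>\<^sup>2) / \<epsilon>\<^sup>2 * exp (- 4 * s j * T)"
    using assms by (simp add: power_less_one_iff)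
  then show "0 < gact \<epsilon> s T j" and "gact \<epsilon> s T j < 1"
    by (simp_all add: gact_def)
qed

section \<open>Reverse water-filling\<close>

lemma log2p_nonneg: "0 \<le> log2p y"
  by (simp add: log2p_def)

lemma log2p_eq_0:
  assumes "0 \<le> y" "y \<le> 1"
  shows "log2p y = 0"
proof (cases "y = 0")
  case False
  with assms have "log 2 y \<le> 0" by simp
  then show ?thesis by (simp add: log2p_def)
qed (simp add: log2p_def log_def)

lemma log2p_eq_log: "1 < y \<Longrightarrow> log2p y = log 2 y"
  by (simp add: log2p_def)

lemma log2p_pos_iff: "0 \<le> y \<Longrightarrow> 0 < log2p y \<longleftrightarrow> 1 < y"
  by (cases "y \<le> 1") (auto simp: log2p_eq_0 log2p_eq_log)

lemma log2p_mono: "0 \<le> y \<Longrightarrow> y \<le> y' \<Longrightarrow> log2p y \<le> log2p y'"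
  by (cases "y \<le> 1") (auto simp: log2p_eq_0 log2p_nonneg log2p_eq_log)

lemma log2p_strict_mono: "0 \<le> y \<Longrightarrow> y < y' \<Longrightarrow> 1 < y' \<Longrightarrow> log2p y < log2p y'"
  by (cases "y \<le> 1") (auto simp: log2p_eq_0 log2p_eq_log)

lemma log2p_ratio: "0 < l \<Longrightarrow> 0 < D \<Longrightarrow> log2p (l / D) = - log 2 (min l D / l)"
  by (cases "l \<le> D") (auto simp: log2p_eq_0 log2p_eq_log log_divide)

definition water_filling_rate :: "nat \<Rightarrow> (nat \<Rightarrow> real) \<Rightarrow> real \<Rightarrow> real" where
  "water_filling_rate d lam D = (\<Sum>j=1..d. log2p (lam j / D) / 2)"

lemma water_filling_rate_strict_antimono:
  assumes "0 < D" "D < D'" "\<And>j. j \<in> {1..d} \<Longrightarrow> 0 \<le> lam j"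
    and "0 < water_filling_rate d lam D'"
  shows "water_filling_rate d lam D' < water_filling_rate d lam D"
proof -
  have "\<exists>k\<in>{1..d}. 0 < log2p (lam k / D')"
  proof (rule ccontr)
    assume "\<not> ?thesis"
    then have "(\<Sum>j=1..d. log2p (lam j / D') / 2) \<le> 0"
      by (intro sum_nonpos) (force simp: not_less)
    with assms(4) show False by (simp add: water_filling_rate_def)
  qed
  then obtain k where "k \<in> {1..d}" "0 < log2p (lam k / D')" ..
  then have "1 < lam k / D'"
    using assms log2p_pos_iff[of "lam k / D'"] by auto
  moreover have "lam k / D' < lam k / D"
    using assms \<open>1 < lam k / D'\<close> by (intro divide_strict_left_mono) (auto simp: field_simps)
  ultimately have "log2p (lam k / D') < log2p (lam k / D)"
    using assms by (intro log2p_strict_mono) auto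
  moreover have "log2p (lam j / D') \<le> log2p (lam j / D)" if "j \<in> {1..d}" for j
    using assms that by (intro log2p_mono divide_left_mono) auto
  ultimately have "(\<Sum>j=1..d. log2p (lam j / D') / 2) < (\<Sum>j=1..d. log2p (lam j / D) / 2)"
    using \<open>k \<in> {1..d}\<close> by (intro sum_strict_mono_ex1) (auto intro: divide_right_mono)
  then show ?thesis by (simp add: water_filling_rate_def)
qed

lemma continuous_on_water_filling_rate: "continuous_on {0<..} (water_filling_rate d lam)"
proof -
  have "continuous_on {0<..} (\<lambda>D. log2p (lam j / D) / 2)" for j
    unfolding log2p_def log_def by (cases "lam j = 0") (auto intro!: continuous_intros)
  then show ?thesis
    unfolding water_filling_rate_def by (intro continuous_on_sum) auto
qed

lemma ex_water_filling_rate_eq: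
  assumes "0 < R" and nonneg: "\<And>j. j \<in> {1..d} \<Longrightarrow> 0 \<le> lam j"
    and "k \<in> {1..d}" "0 < lam k"
  shows "\<exists>D. 0 < D \<and> water_filling_rate d lam D = R"
proof -
  define D1 where "D1 = lam k * 2 powr (- 2 * R)"
  define D2 where "D2 = lam k + (\<Sum>j=1..d. lam j)"
  have "0 < D1" using \<open>0 < lam k\<close> by (simp add: D1_def)
  have "lam j \<le> (\<Sum>j=1..d. lam j)" if "j \<in> {1..d}" for j
    using nonneg that by (intro member_le_sum) auto
  then have above: "lam j < D2" if "j \<in> {1..d}" for j
    using that \<open>0 < lam k\<close> by (fastforce simp: D2_def)
  have "2 powr (- 2 * R) < 1"
    using \<open>0 < R\<close> by (simp add: powr_less_one)
  then have "D1 \<le> lam k"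
    using \<open>0 < lam k\<close> by (simp add: D1_def)
  then have "D1 \<le> D2"
    using above[OF \<open>k \<in> {1..d}\<close>] by simp
  have "log2p (lam j / D2) = 0" if "j \<in> {1..d}" for j
    using above[OF that] nonneg[OF that] \<open>0 < D1\<close> \<open>D1 \<le> D2\<close> by (intro log2p_eq_0) auto
  then have "water_filling_rate d lam D2 = 0"
    unfolding water_filling_rate_def by (intro sum.neutral) auto
  moreover have "R \<le> water_filling_rate d lam D1"
  proof -
    have "log2p (lam k / D1) = 2 * R"
      using \<open>0 < lam k\<close> \<open>0 < R\<close>
      by (simp add: D1_def log2p_eq_log powr_minus divide_simps)
    moreover have "log2p (lam k / D1) / 2 \<le> water_filling_rate d lam D1"
      unfolding water_filling_rate_def
      using \<open>k \<in> {1..d}\<close> by (intro member_le_sum) (auto simp: log2p_nonneg)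
    ultimately show ?thesis by simp
  qed
  moreover have "continuous_on {D1..D2} (water_filling_rate d lam)"
    by (rule continuous_on_subset[OF continuous_on_water_filling_rate]) (use \<open>0 < D1\<close> in auto)
  ultimately obtain D where "D1 \<le> D" "D \<le> D2" "water_filling_rate d lam D = R"
    using IVT2'[of "water_filling_rate d lam" D2 R D1] \<open>D1 \<le> D2\<close> \<open>0 < R\<close> by auto
  then show ?thesis
    using \<open>0 < D1\<close> by (blast intro: order_less_le_trans)
qed

lemma ex1_water_filling_rate_eq:
  assumes "0 < R" and nonneg: "\<And>j. j \<in> {1..d} \<Longrightarrow> 0 \<le> lam j"
    and "k \<in> {1..d}" "0 < lam k"
  shows "\<exists>!D. 0 < D \<and> water_filling_rate d lam D = R"
proof (rule ex_ex1I)
  show "\<exists>D. 0 < D \<and> water_filling_rate d lam D = R"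
    using ex_water_filling_rate_eq[of R d lam k] assms by blast
next
  have less: "water_filling_rate d lam D' < water_filling_rate d lam D"
    if "0 < D" "D < D'" "water_filling_rate d lam D' = R" for D D'
    by (rule water_filling_rate_strict_antimono) (use that nonneg \<open>0 < R\<close> in auto)
  fix D D' assume "0 < D \<and> water_filling_rate d lam D = R" "0 < D' \<and> water_filling_rate d lam D' = R"
  then show "D = D'"
    using less[of D D'] less[of D' D] by (cases D D' rule: linorder_cases) auto
qed

lemma water_level_spec:
  assumes "0 < R" "\<And>j. j \<in> {1..d} \<Longrightarrow> 0 \<le> lam j" "k \<in> {1..d}" "0 < lam k"
  shows "0 < water_level d lam R" and "water_filling_rate d lam (water_level d lam R) = R"
proof -
  have "water_level d lam R = (THE D. 0 < D \<and> water_filling_rate d lam D = R)"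
    unfolding water_level_def water_filling_rate_def ..
  then show "0 < water_level d lam R" and "water_filling_rate d lam (water_level d lam R) = R"
    using theI'[OF ex1_water_filling_rate_eq[of R d lam k, OF assms]] by simp_all
qed

lemma water_level_mono:
  assumes "0 < R" and nonneg: "\<And>j. j \<in> {1..d} \<Longrightarrow> 0 \<le> lam j"
    and "k \<in> {1..d}" "0 < lam k" and le: "\<And>j. j \<in> {1..d} \<Longrightarrow> lam j \<le> lam' j"
  shows "water_level d lam R \<le> water_level d lam' R"
proof (rule ccontr)
  let ?D = "water_level d lam R" and ?D' = "water_level d lam' R"
  assume "\<not> ?D \<le> ?D'"
  have nonneg': "0 \<le> lam' j" if "j \<in> {1..d}" for j
    using nonneg[OF that] le[OF that] by simp
  have D: "0 < ?D" "water_filling_rate d lam ?D = R"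
    using water_level_spec[of R d lam k, OF assms(1-4)] by auto
  have D': "0 < ?D'" "water_filling_rate d lam' ?D' = R"
    using water_level_spec[of R d lam' k, OF \<open>0 < R\<close> nonneg' \<open>k \<in> {1..d}\<close>]
      \<open>0 < lam k\<close> le[OF \<open>k \<in> {1..d}\<close>] by auto
  have "log2p (lam j / ?D) \<le> log2p (lam' j / ?D)" if "j \<in> {1..d}" for j
    using le[OF that] nonneg[OF that] D(1) by (intro log2p_mono divide_right_mono) auto
  then have "water_filling_rate d lam ?D \<le> water_filling_rate d lam' ?D"
    unfolding water_filling_rate_def by (intro sum_mono divide_right_mono) auto
  then have "R \<le> water_filling_rate d lam' ?D"
    using D(2) by simp
  moreover have "water_filling_rate d lam' ?D < water_filling_rate d lam' ?D'"
    if "0 < water_filling_rate d lam' ?D"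
    by (rule water_filling_rate_strict_antimono[OF D'(1) _ nonneg' that])
      (use \<open>\<not> ?D \<le> ?D'\<close> in simp)
  ultimately show False
    using D'(2) \<open>0 < R\<close> by linarith
qed

lemma chc_bounds:
  assumes "0 < R" "\<And>i. i \<in> {1..d} \<Longrightarrow> 0 \<le> lam i" "j \<in> {1..d}"
  shows "0 \<le> chc d lam R j" and "chc d lam R j \<le> 1"
proof -
  have "0 \<le> chc d lam R j \<and> chc d lam R j \<le> 1"
  proof (cases "active d lam R j \<and> 0 < lam j")
    case True
    then have "0 < water_level d lam R" "water_level d lam R < lam j"
      using water_level_spec(1)[of R d lam j, OF assms] by (auto simp: active_def)
    then show ?thesis
      using True by (simp add: chc_def chD_def)
  qed (use assms(2)[OF assms(3)] in \<open>auto simp: chc_def\<close>)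
  then show "0 \<le> chc d lam R j" and "chc d lam R j \<le> 1" by auto
qed

lemma chD_eq_chc:
  assumes "0 < R" "\<And>i. i \<in> {1..d} \<Longrightarrow> 0 \<le> lam i" "j \<in> {1..d}" "0 < lam j"
  shows "chD d lam R j = (1 - chc d lam R j) * lam j"
  using water_level_spec(1)[of R d lam j, OF assms] \<open>0 < lam j\<close>
  by (auto simp: chc_def chD_def active_def)

lemma rd_du_eq:
  assumes "0 < R" "\<And>i. i \<in> {1..d} \<Longrightarrow> 0 < s i" "j \<in> {1..d}"
  shows "rd_du d s R 1 u v j = 2 * s j * v j * (1 - chc d (lat_var s u) R j * u j * v j)
    - 2 * s j * u j * (1 - chc d (lat_var s u) R j)"
proof (cases "0 < lat_var s u j")
  case True
  have "chD d (lat_var s u) R j / u j = s j * u j * (1 - chc d (lat_var s u) R j)"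
    using chD_eq_chc[of R d "lat_var s u" j, OF \<open>0 < R\<close> _ \<open>j \<in> {1..d}\<close> True] assms(2) True
    by (auto simp: lat_var_def power2_eq_square less_imp_le)
  then show ?thesis by (simp add: rd_du_def)
next
  case False
  then have "u j = 0"
    using assms(2)[OF \<open>j \<in> {1..d}\<close>] by (auto simp: lat_var_def zero_less_mult_iff)
  then show ?thesis
    by (simp add: rd_du_def)
qed

lemma not_active_if_rate_le:
  assumes "0 < R" and pos: "\<And>i. i \<in> {1..d} \<Longrightarrow> 0 < lam i" and "j \<in> {1..d}"
    and le: "R \<le> 1/2 * (\<Sum>i=1..j-1. log 2 (lam i / lam j))"
  shows "\<not> active d lam R j"
proof
  let ?D = "water_level d lam R"
  assume "active d lam R j"
  then have "?D < lam j" by (simp add: active_def)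
  have D: "0 < ?D" "water_filling_rate d lam ?D = R"
    using water_level_spec[of R d lam j] assms by (auto intro: less_imp_le)
  have "(\<Sum>i=1..j-1. log 2 (lam i / lam j) / 2) \<le> (\<Sum>i=1..j-1. log2p (lam i / ?D) / 2)"
  proof (rule sum_mono)
    fix i assume "i \<in> {1..j-1}"
    then have "i \<in> {1..d}" using \<open>j \<in> {1..d}\<close> by auto
    then have "log 2 (lam i / lam j) \<le> log 2 (lam i / ?D)"
      using pos[of i] pos[OF \<open>j \<in> {1..d}\<close>] \<open>?D < lam j\<close> D(1)
      by (simp add: divide_left_mono)
    then show "log 2 (lam i / lam j) / 2 \<le> log2p (lam i / ?D) / 2"
      by (simp add: log2p_def)
  qed
  also have "\<dots> < (\<Sum>i=1..j-1. log2p (lam i / ?D) / 2) + log2p (lam j / ?D) / 2"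
    using \<open>?D < lam j\<close> D(1) by (simp add: log2p_def)
  also have "\<dots> = (\<Sum>i=1..j. log2p (lam i / ?D) / 2)"
    using \<open>j \<in> {1..d}\<close> by (cases j) auto
  also have "\<dots> \<le> water_filling_rate d lam ?D"
    unfolding water_filling_rate_def
    using \<open>j \<in> {1..d}\<close> by (intro sum_mono2) (auto simp: log2p_nonneg)
  finally show False
    using le D(2) by (simp add: sum_divide_distrib)
qed

lemma m_wu_bounds:
  assumes "1 \<le> d" "0 < R"
  shows "1 \<le> m_wu d s \<epsilon> T R" and "m_wu d s \<epsilon> T R \<le> d"
proof -
  let ?S = "{m \<in> {1..d}. R > 1/2 * (\<Sum>i=1..m-1. log 2 ((s i * gact \<epsilon> s T i) / (s m * gact \<epsilon> s T m)))}"
  have "1 \<in> ?S" using assms by simp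
  then have "m_wu d s \<epsilon> T R \<in> ?S"
    unfolding m_wu_def by (intro Max_in) auto
  then show "1 \<le> m_wu d s \<epsilon> T R" and "m_wu d s \<epsilon> T R \<le> d" by auto
qed

lemma rate_le_if_m_wu_less:
  assumes "j \<in> {1..d}" "m_wu d s \<epsilon> T R < j"
  shows "R \<le> 1/2 * (\<Sum>i=1..j-1. log 2 ((s i * gact \<epsilon> s T i) / (s j * gact \<epsilon> s T j)))"
proof (rule ccontr)
  assume "\<not> ?thesis"
  then have "j \<le> m_wu d s \<epsilon> T R"
    unfolding m_wu_def using \<open>j \<in> {1..d}\<close> by (intro Max_ge) auto
  with \<open>m_wu d s \<epsilon> T R < j\<close> show False by simp
qed

lemma not_active_if_m_wu_less:
  assumes "0 < R" and lam: "\<And>i. i \<in> {1..d} \<Longrightarrow> lam i = s i * gact \<epsilon> s T i"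
    and pos: "\<And>i. i \<in> {1..d} \<Longrightarrow> 0 < lam i" and "j \<in> {1..d}" "m_wu d s \<epsilon> T R < j"
  shows "\<not> active d lam R j"
proof (rule not_active_if_rate_le[OF \<open>0 < R\<close> pos \<open>j \<in> {1..d}\<close>])
  have "(\<Sum>i=1..j-1. log 2 (lam i / lam j))
      = (\<Sum>i=1..j-1. log 2 ((s i * gact \<epsilon> s T i) / (s j * gact \<epsilon> s T j)))"
  proof (rule sum.cong[OF refl])
    fix i assume "i \<in> {1..j-1}"
    then have "i \<in> {1..d}" using \<open>j \<in> {1..d}\<close> by auto
    then show "log 2 (lam i / lam j) = log 2 ((s i * gact \<epsilon> s T i) / (s j * gact \<epsilon> s T j))"
      using lam \<open>j \<in> {1..d}\<close> by simp
  qed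
  then show "R \<le> 1/2 * (\<Sum>i=1..j-1. log 2 (lam i / lam j))"
    using rate_le_if_m_wu_less[OF \<open>j \<in> {1..d}\<close> \<open>m_wu d s \<epsilon> T R < j\<close>] by simp
qed

section \<open>The reconstruction loss through the channel\<close>

lemma mode_loss_ge_distortion:
  assumes "0 < lat_var s u j"
  shows "s j * (chD d (lat_var s u) R j / lat_var s u j)
    \<le> s j * (1 - chc d (lat_var s u) R j * u j * u j)\<^sup>2 + (u j)\<^sup>2 * chtau2 d (lat_var s u) R j"
proof -
  let ?lam = "lat_var s u j" and ?D = "chD d (lat_var s u) R j"
  define x where "x = ?D / ?lam"
  have "?D \<le> ?lam" by (simp add: chD_def)
  then have "x \<le> 1" using assms by (simp add: x_def)
  have c: "chc d (lat_var s u) R j = 1 - x"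
    using assms by (auto simp: chc_def chD_def active_def x_def)
  have tau: "chtau2 d (lat_var s u) R j = (1 - x) * (x * ?lam)"
    using c assms by (auto simp: chtau2_def chD_def x_def active_def)
  have "s j * (1 - chc d (lat_var s u) R j * u j * u j)\<^sup>2 + (u j)\<^sup>2 * chtau2 d (lat_var s u) R j
      = s j * x + s j * (1 - x) * (1 - (u j)\<^sup>2)\<^sup>2"
    by (simp only: tau c) (simp add: lat_var_def algebra_simps power2_eq_square)
  moreover have "0 \<le> s j"
    using assms by (auto simp: lat_var_def zero_less_mult_iff)
  ultimately show ?thesis
    using \<open>x \<le> 1\<close> by (simp add: x_def)
qed

lemma Lrec_ge_distortion:
  assumes "\<And>j. j \<in> {1..d} \<Longrightarrow> v j = u j" "\<And>j. j \<in> {1..d} \<Longrightarrow> 0 < lat_var s u j"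
  shows "(\<Sum>j=1..d. s j * (chD d (lat_var s u) R j / lat_var s u j)) \<le> Lrec d s R u v"
  unfolding Lrec_def
proof (rule sum_mono)
  fix j assume "j \<in> {1..d}"
  then show "s j * (chD d (lat_var s u) R j / lat_var s u j)
      \<le> s j * (1 - chc d (lat_var s u) R j * u j * v j)\<^sup>2 + (v j)\<^sup>2 * chtau2 d (lat_var s u) R j"
    using mode_loss_ge_distortion[OF assms(2)] assms(1) by simp
qed

lemma distortion_ratio_inactive: "\<not> active d lam R j \<Longrightarrow> 0 < lam j \<Longrightarrow> chD d lam R j / lam j = 1"
  by (simp add: active_def chD_def min_def)

lemma distortion_ratio_pos:
  assumes "0 < R" "\<And>i. i \<in> {1..d} \<Longrightarrow> 0 < lam i" "j \<in> {1..d}"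
  shows "0 < chD d lam R j / lam j"
  using water_level_spec(1)[of R d lam j] assms by (simp add: chD_def less_imp_le)

lemma prod_distortion_ratio:
  assumes "0 < R" and pos: "\<And>j. j \<in> {1..d} \<Longrightarrow> 0 < lam j" and "1 \<le> m" "m \<le> d"
    and inactive: "\<And>j. j \<in> {1..d} \<Longrightarrow> m < j \<Longrightarrow> \<not> active d lam R j"
  shows "(\<Prod>j=1..m. chD d lam R j / lam j) = 2 powr (- 2 * R)"
proof -
  let ?D = "water_level d lam R" and ?x = "\<lambda>j. chD d lam R j / lam j"
  have "1 \<in> {1..d}" using assms by simp
  have D: "0 < ?D" "water_filling_rate d lam ?D = R"
    using water_level_spec[of R d lam 1] assms \<open>1 \<in> {1..d}\<close> by (auto intro: less_imp_le)
  have "log2p (lam j / ?D) = - log 2 (?x j)" if "j \<in> {1..d}" for j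
    using log2p_ratio[OF pos[OF that] D(1)] by (simp add: chD_def)
  then have "R = - (\<Sum>j=1..d. log 2 (?x j)) / 2"
    using D(2) by (simp add: water_filling_rate_def sum_divide_distrib sum_negf)
  moreover have "(\<Sum>j=1..d. log 2 (?x j)) = (\<Sum>j=1..m. log 2 (?x j))"
  proof (rule sum.mono_neutral_right)
    show "\<forall>j\<in>{1..d} - {1..m}. log 2 (?x j) = 0"
    proof
      fix j assume "j \<in> {1..d} - {1..m}"
      then have "j \<in> {1..d}" "m < j" by auto
      then show "log 2 (?x j) = 0"
        by (simp add: distortion_ratio_inactive[OF inactive pos])
    qed
  qed (use \<open>m \<le> d\<close> in auto)
  ultimately have "(\<Sum>j=1..m. log 2 (?x j)) = - 2 * R" by simp
  then have "2 powr (- 2 * R) = (\<Prod>j=1..m. 2 powr log 2 (?x j))"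
    by (metis powr_sum zero_neq_numeral)
  also have "\<dots> = (\<Prod>j=1..m. ?x j)"
  proof (rule prod.cong[OF refl])
    fix j assume "j \<in> {1..m}"
    then have "j \<in> {1..d}" using \<open>m \<le> d\<close> by auto
    then show "2 powr log 2 (?x j) = ?x j"
      using distortion_ratio_pos[of R d lam j, OF \<open>0 < R\<close> pos] by simp
  qed
  finally show ?thesis ..
qed

lemma card_mult_geom_mean_le_sum:
  fixes x :: "'a \<Rightarrow> real"
  assumes "finite S" "S \<noteq> {}" "\<And>i. i \<in> S \<Longrightarrow> 0 \<le> x i"
  shows "card S * (\<Prod>i\<in>S. x i) powr (1 / card S) \<le> (\<Sum>i\<in>S. x i)"
proof -
  have "(\<Prod>i\<in>S. x i) powr (1 / card S) \<le> (\<Sum>i\<in>S. x i) / card S"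
    using arith_geom_mean[OF assms] by (simp add: sum_divide_distrib)
  then show ?thesis
    using assms by (simp add: field_simps card_gt_0_iff)
qed

text \<open>Inactive modes cost their full variance; for the others the distortion ratios multiply
  to \<open>2 powr (- 2 * R)\<close>, so AM-GM bounds their weighted sum by the equal split.\<close>
lemma Lrec_lower_bound:
  assumes "0 < R" "1 \<le> m" "m \<le> d"
    and s_pos: "\<And>j. j \<in> {1..d} \<Longrightarrow> 0 < s j"
    and balanced: "\<And>j. j \<in> {1..d} \<Longrightarrow> v j = u j"
    and nonzero: "\<And>j. j \<in> {1..d} \<Longrightarrow> u j \<noteq> 0"
    and inactive: "\<And>j. j \<in> {1..d} \<Longrightarrow> m < j \<Longrightarrow> \<not> active d (lat_var s u) R j"
  shows "real m * delta s m R + (\<Sum>j\<in>{m+1..d}. s j) \<le> Lrec d s R u v"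
proof -
  let ?lam = "lat_var s u"
  let ?x = "\<lambda>j. chD d ?lam R j / ?lam j"
  have lam_pos: "0 < ?lam j" if "j \<in> {1..d}" for j
    using s_pos[OF that] nonzero[OF that] by (simp add: lat_var_def)
  have split: "{1..d} = {1..m} \<union> {m+1..d}" using \<open>1 \<le> m\<close> \<open>m \<le> d\<close> by auto
  have ratio_one: "?x j = 1" if "j \<in> {m+1..d}" for j
  proof -
    have "j \<in> {1..d}" "m < j" using that \<open>1 \<le> m\<close> by auto
    then show ?thesis by (simp add: distortion_ratio_inactive[OF inactive lam_pos])
  qed
  have "(\<Sum>j\<in>{m+1..d}. s j * ?x j) = (\<Sum>j\<in>{m+1..d}. s j)"
    by (rule sum.cong[OF refl]) (simp only: ratio_one mult_1_right)
  then have "(\<Sum>j=1..d. s j * ?x j) = (\<Sum>j=1..m. s j * ?x j) + (\<Sum>j\<in>{m+1..d}. s j)"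
    unfolding split by (subst sum.union_disjoint) auto
  moreover have "real m * delta s m R \<le> (\<Sum>j=1..m. s j * ?x j)"
  proof -
    have "(\<Prod>j=1..m. s j * ?x j) = (\<Prod>j=1..m. s j) * (\<Prod>j=1..m. ?x j)"
      by (rule prod.distrib)
    also have "\<dots> = (\<Prod>j=1..m. s j) * 2 powr (- 2 * R)"
      by (simp only: prod_distortion_ratio[of R d ?lam m, OF \<open>0 < R\<close> lam_pos \<open>1 \<le> m\<close> \<open>m \<le> d\<close> inactive])
    finally have "(\<Prod>j=1..m. s j * ?x j) powr (1 / m) = delta s m R"
      using s_pos \<open>m \<le> d\<close>
      by (simp add: delta_def powr_mult powr_powr prod_nonneg less_imp_le)
    moreover have "0 \<le> s j * ?x j" if "j \<in> {1..m}" for j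
    proof -
      have "j \<in> {1..d}" using that \<open>m \<le> d\<close> by auto
      then show ?thesis
        using s_pos distortion_ratio_pos[of R d ?lam j, OF \<open>0 < R\<close> lam_pos]
        by (metis less_imp_le mult_pos_pos)
    qed
    ultimately show ?thesis
      using card_mult_geom_mean_le_sum[of "{1..m}" "\<lambda>j. s j * ?x j"] \<open>1 \<le> m\<close> by simp
  qed
  ultimately show ?thesis
    using Lrec_ge_distortion[of d v u s R] balanced lam_pos by simp
qed

section \<open>The RD-AE phase\<close>

locale rd_ae_flow =
  fixes d :: nat and s :: "nat \<Rightarrow> real" and R T0 :: real and u v :: "real \<Rightarrow> nat \<Rightarrow> real"
  assumes s_pos: "\<And>j. j \<in> {1..d} \<Longrightarrow> 0 < s j"
    and R_pos: "0 < R"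
    and rd_u: "\<And>j t. j \<in> {1..d} \<Longrightarrow> T0 \<le> t \<Longrightarrow>
      ((\<lambda>\<tau>. u \<tau> j) has_real_derivative rd_du d s R 1 (u t) (v t) j) (at t within {T0..})"
    and rd_v: "\<And>j t. j \<in> {1..d} \<Longrightarrow> T0 \<le> t \<Longrightarrow>
      ((\<lambda>\<tau>. v \<tau> j) has_real_derivative rd_dv d s R (u t) (v t) j) (at t within {T0..})"
    and start_balanced: "\<And>j. j \<in> {1..d} \<Longrightarrow> v T0 j = u T0 j"
    and start_pos: "\<And>j. j \<in> {1..d} \<Longrightarrow> 0 < (u T0 j)\<^sup>2"
    and start_below_one: "\<And>j. j \<in> {1..d} \<Longrightarrow> (u T0 j)\<^sup>2 < 1"
begin

lemma chc_bounds_at: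
  assumes "j \<in> {1..d}"
  shows "0 \<le> chc d (lat_var s (u t)) R j" and "chc d (lat_var s (u t)) R j \<le> 1"
  using chc_bounds[OF R_pos _ assms, of "lat_var s (u t)"] s_pos
  by (auto simp: lat_var_def less_imp_le)

lemma mode_flow:
  assumes "j \<in> {1..d}" "x \<in> {T0..t}"
  shows "v x j = u x j"
    and "((\<lambda>\<tau>. (u \<tau> j)\<^sup>2) has_real_derivative
      4 * s j * chc d (lat_var s (u x)) R j * (u x j)\<^sup>2 * (1 - (u x j)\<^sup>2)) (at x within {T0..t})"
proof -
  let ?C = "\<lambda>\<tau>. chc d (lat_var s (u \<tau>)) R j"
  note flow = balanced_flow[where U = "\<lambda>\<tau>. u \<tau> j" and V = "\<lambda>\<tau>. v \<tau> j" and C = ?C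
      and \<sigma> = "s j" and a = T0 and b = t]
  have dU: "((\<lambda>\<tau>. u \<tau> j) has_real_derivative
      2 * s j * v y j * (1 - ?C y * u y j * v y j) - 2 * s j * u y j * (1 - ?C y))
      (at y within {T0..t})" if "y \<in> {T0..t}" for y
  proof -
    have "((\<lambda>\<tau>. u \<tau> j) has_real_derivative rd_du d s R 1 (u y) (v y) j) (at y within {T0..t})"
      using that by (intro DERIV_subset[OF rd_u[OF \<open>j \<in> {1..d}\<close>]]) auto
    then show ?thesis
      by (simp only: rd_du_eq[OF R_pos s_pos \<open>j \<in> {1..d}\<close>])
  qed
  have dV: "((\<lambda>\<tau>. v \<tau> j) has_real_derivative 2 * s j * ?C y * u y j * (1 - u y j * v y j))
      (at y within {T0..t})" if "y \<in> {T0..t}" for y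
  proof -
    have "((\<lambda>\<tau>. v \<tau> j) has_real_derivative rd_dv d s R (u y) (v y) j) (at y within {T0..t})"
      using that by (intro DERIV_subset[OF rd_v[OF \<open>j \<in> {1..d}\<close>]]) auto
    then show ?thesis by (simp only: rd_dv_def)
  qed
  have hyps: "0 \<le> ?C y \<and> ?C y \<le> 1" "0 \<le> s j" "u T0 j = v T0 j" for y
    using chc_bounds_at[OF \<open>j \<in> {1..d}\<close>] s_pos[OF \<open>j \<in> {1..d}\<close>]
      start_balanced[OF \<open>j \<in> {1..d}\<close>] by auto
  show "v x j = u x j"
    using flow(1)[OF dU dV hyps assms(2)] by simp
  show "((\<lambda>\<tau>. (u \<tau> j)\<^sup>2) has_real_derivative
      4 * s j * ?C x * (u x j)\<^sup>2 * (1 - (u x j)\<^sup>2)) (at x within {T0..t})"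
    using flow(2)[OF dU dV hyps assms(2)] .
qed

lemma activation_bounds:
  assumes "j \<in> {1..d}" "T0 \<le> t"
  shows "0 < (u t j)\<^sup>2" and "(u t j)\<^sup>2 < 1" and "(u T0 j)\<^sup>2 \<le> (u t j)\<^sup>2"
proof -
  note invariant = logistic_flow_invariant[where W = "\<lambda>\<tau>. (u \<tau> j)\<^sup>2" and a = T0 and b = t
      and \<kappa> = "\<lambda>\<tau>. 4 * s j * chc d (lat_var s (u \<tau>)) R j" and K = "4 * s j"]
  have deriv: "((\<lambda>\<tau>. (u \<tau> j)\<^sup>2) has_real_derivative
      4 * s j * chc d (lat_var s (u x)) R j * (u x j)\<^sup>2 * (1 - (u x j)\<^sup>2)) (at x within {T0..t})"
    if "x \<in> {T0..t}" for x
    using mode_flow(2)[OF \<open>j \<in> {1..d}\<close> that] .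
  have rate: "0 \<le> 4 * s j * chc d (lat_var s (u x)) R j \<and> 4 * s j * chc d (lat_var s (u x)) R j \<le> 4 * s j"
    for x
    using chc_bounds_at[OF \<open>j \<in> {1..d}\<close>, of x] s_pos[OF \<open>j \<in> {1..d}\<close>] by simp
  have "t \<in> {T0..t}" using \<open>T0 \<le> t\<close> by auto
  show "0 < (u t j)\<^sup>2" and "(u t j)\<^sup>2 < 1" and "(u T0 j)\<^sup>2 \<le> (u t j)\<^sup>2"
    using invariant[OF deriv rate start_pos[OF \<open>j \<in> {1..d}\<close>] start_below_one[OF \<open>j \<in> {1..d}\<close>]
        \<open>t \<in> {T0..t}\<close>]
    by simp_all
qed

lemma lat_var_pos: "j \<in> {1..d} \<Longrightarrow> T0 \<le> t \<Longrightarrow> 0 < lat_var s (u t) j"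
  using activation_bounds(1) s_pos by (simp add: lat_var_def)

lemma lat_var_ge_start: "j \<in> {1..d} \<Longrightarrow> T0 \<le> t \<Longrightarrow> lat_var s (u T0) j \<le> lat_var s (u t) j"
  using activation_bounds(3) s_pos by (simp add: lat_var_def mult_right_mono less_imp_le)

lemma water_level_ge_start:
  assumes "1 \<le> d" "T0 \<le> t"
  shows "water_level d (lat_var s (u T0)) R \<le> water_level d (lat_var s (u t)) R"
  using assms lat_var_pos lat_var_ge_start
  by (intro water_level_mono[OF R_pos, of d _ 1]) (auto intro: less_imp_le)

lemma inactive_excess_le_growth:
  assumes "j \<in> {1..d}" "\<not> active d (lat_var s (u T0)) R j" "T0 \<le> x"
  shows "chc d (lat_var s (u x)) R j * lat_var s (u x) j \<le> lat_var s (u x) j - lat_var s (u T0) j"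
proof -
  have "lat_var s (u T0) j \<le> water_level d (lat_var s (u T0)) R"
    using \<open>\<not> active d (lat_var s (u T0)) R j\<close> by (simp add: active_def)
  also have "\<dots> \<le> water_level d (lat_var s (u x)) R"
    using water_level_ge_start[OF _ \<open>T0 \<le> x\<close>] \<open>j \<in> {1..d}\<close> by simp
  finally have "lat_var s (u T0) j \<le> chD d (lat_var s (u x)) R j"
    using lat_var_ge_start[OF \<open>j \<in> {1..d}\<close> \<open>T0 \<le> x\<close>] by (simp add: chD_def)
  moreover have "0 \<le> lat_var s (u x) i" if "i \<in> {1..d}" for i
    using lat_var_pos[OF that \<open>T0 \<le> x\<close>] by simp
  ultimately show ?thesis
    using chD_eq_chc[of R d "lat_var s (u x)" j, OF R_pos _ \<open>j \<in> {1..d}\<close>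
        lat_var_pos[OF \<open>j \<in> {1..d}\<close> \<open>T0 \<le> x\<close>]]
    by (simp add: algebra_simps)
qed

text \<open>By \<open>inactive_excess_le_growth\<close> the growth rate of an inactive mode is bounded by a
  multiple of its growth since \<open>T0\<close>, so Gronwall keeps it frozen.\<close>
lemma inactive_mode_frozen:
  assumes "j \<in> {1..d}" "\<not> active d (lat_var s (u T0)) R j" "T0 \<le> t"
  shows "lat_var s (u t) j = lat_var s (u T0) j"
proof -
  let ?lam = "\<lambda>\<tau>. lat_var s (u \<tau>)" and ?C = "\<lambda>\<tau>. chc d (lat_var s (u \<tau>)) R j"
  define h where "h \<tau> = ?lam \<tau> j - ?lam T0 j" for \<tau>
  define h' where "h' x = 4 * s j * (?C x * ?lam x j * (1 - (u x j)\<^sup>2))" for x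
  have deriv: "(h has_real_derivative h' x) (at x within {T0..t})" if "x \<in> {T0..t}" for x
  proof -
    have "h = (\<lambda>\<tau>. s j * (u \<tau> j)\<^sup>2 - s j * (u T0 j)\<^sup>2)"
      by (auto simp: h_def lat_var_def)
    moreover have "h' x = s j * (4 * s j * ?C x * (u x j)\<^sup>2 * (1 - (u x j)\<^sup>2)) - 0"
      by (simp add: h'_def lat_var_def)
    ultimately show ?thesis
      using DERIV_diff[OF DERIV_cmult[OF mode_flow(2)[OF \<open>j \<in> {1..d}\<close> that]] DERIV_const]
      by simp
  qed
  have "\<bar>h' x\<bar> \<le> 4 * s j * \<bar>h x\<bar>" if "x \<in> {T0..t}" for x
  proof -
    have "T0 \<le> x" using that by simp
    have "0 \<le> ?C x * ?lam x j"
      using chc_bounds_at[OF \<open>j \<in> {1..d}\<close>] lat_var_pos[OF \<open>j \<in> {1..d}\<close> \<open>T0 \<le> x\<close>] by simp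
    moreover have "0 < 1 - (u x j)\<^sup>2" "1 - (u x j)\<^sup>2 \<le> 1"
      using activation_bounds[OF \<open>j \<in> {1..d}\<close> \<open>T0 \<le> x\<close>] by auto
    ultimately have "0 \<le> ?C x * ?lam x j * (1 - (u x j)\<^sup>2)" "?C x * ?lam x j * (1 - (u x j)\<^sup>2) \<le> h x"
      using mult_left_le[of "1 - (u x j)\<^sup>2" "?C x * ?lam x j"]
        inactive_excess_le_growth[OF assms(1,2) \<open>T0 \<le> x\<close>] by (auto simp: h_def)
    then have "0 \<le> h' x" "h' x \<le> 4 * s j * h x" "0 \<le> h x"
      using s_pos[OF \<open>j \<in> {1..d}\<close>] unfolding h'_def by (auto intro: mult_left_mono)
    then show ?thesis by simp
  qed
  then have "h t = 0"
    using deriv_linearly_bounded_vanishes[OF deriv, of "4 * s j" T0 t] \<open>T0 \<le> t\<close>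
    by (simp add: h_def)
  then show ?thesis by (simp add: h_def)
qed

lemma inactive_stays_inactive:
  assumes "j \<in> {1..d}" "\<not> active d (lat_var s (u T0)) R j" "T0 \<le> t"
  shows "\<not> active d (lat_var s (u t)) R j"
  using inactive_mode_frozen[OF assms] water_level_ge_start[OF _ \<open>T0 \<le> t\<close>] assms
  by (auto simp: active_def)

context
  fixes m :: nat
  assumes inactive_start: "\<And>j. j \<in> {1..d} \<Longrightarrow> m < j \<Longrightarrow> \<not> active d (lat_var s (u T0)) R j"
begin

lemma card_active_le:
  assumes "T0 \<le> t"
  shows "card {j \<in> {1..d}. active d (lat_var s (u t)) R j} \<le> m"
proof -
  have "{j \<in> {1..d}. active d (lat_var s (u t)) R j} \<subseteq> {1..m}"
    using inactive_stays_inactive[OF _ inactive_start assms] by fastforce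
  then show ?thesis
    using card_mono[of "{1..m}"] by fastforce
qed

lemma Lrec_ge:
  assumes "1 \<le> m" "m \<le> d" "T0 \<le> t"
  shows "real m * delta s m R + (\<Sum>j\<in>{m+1..d}. s j) \<le> Lrec d s R (u t) (v t)"
proof (rule Lrec_lower_bound[OF R_pos assms(1,2) s_pos])
  fix j assume "j \<in> {1..d}"
  show "v t j = u t j"
    using mode_flow(1)[OF \<open>j \<in> {1..d}\<close>, of t t] \<open>T0 \<le> t\<close> by simp
  show "u t j \<noteq> 0"
    using activation_bounds(1)[OF \<open>j \<in> {1..d}\<close> \<open>T0 \<le> t\<close>] by auto
  show "\<not> active d (lat_var s (u t)) R j" if "m < j"
    using inactive_stays_inactive[OF \<open>j \<in> {1..d}\<close> inactive_start[OF \<open>j \<in> {1..d}\<close> that] \<open>T0 \<le> t\<close>] .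
qed

end

end

theorem theorem1:
  fixes d :: nat and s :: "nat \<Rightarrow> real" and \<epsilon> R Twu Linf :: real
    and u v :: "real \<Rightarrow> nat \<Rightarrow> real"
  assumes d_pos: "d \<ge> 1"
    and s_pos: "s d > 0"
    and s_decr: "\<And>i j. 1 \<le> i \<Longrightarrow> i < j \<Longrightarrow> j \<le> d \<Longrightarrow> s j < s i"
    and eps: "0 < \<epsilon>" "\<epsilon> < 1"
    and R_pos: "R > 0"
    and Twu: "Twu \<ge> 0"
    and init_u: "\<And>j. j \<in> {1..d} \<Longrightarrow> u 0 j = \<epsilon>"
    and init_v: "\<And>j. j \<in> {1..d} \<Longrightarrow> v 0 j = \<epsilon>"
    and warm_u: "\<And>j t. j \<in> {1..d} \<Longrightarrow> t \<in> {0..Twu} \<Longrightarrow>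
        ((\<lambda>\<tau>. u \<tau> j) has_real_derivative pae_du s (u t) (v t) j) (at t within {0..Twu})"
    and warm_v: "\<And>j t. j \<in> {1..d} \<Longrightarrow> t \<in> {0..Twu} \<Longrightarrow>
        ((\<lambda>\<tau>. v \<tau> j) has_real_derivative pae_dv s (u t) (v t) j) (at t within {0..Twu})"
    and rd_u: "\<And>j t. j \<in> {1..d} \<Longrightarrow> t \<ge> Twu \<Longrightarrow>
        ((\<lambda>\<tau>. u \<tau> j) has_real_derivative rd_du d s R 1 (u t) (v t) j) (at t within {Twu..})"
    and rd_v: "\<And>j t. j \<in> {1..d} \<Longrightarrow> t \<ge> Twu \<Longrightarrow>
        ((\<lambda>\<tau>. v \<tau> j) has_real_derivative rd_dv d s R (u t) (v t) j) (at t within {Twu..})"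
    and conv: "((\<lambda>t. Lrec d s R (u t) (v t)) \<longlongrightarrow> Linf) at_top"
  shows "(\<forall>\<^sub>F t in at_top.
            card {j \<in> {1..d}. active d (lat_var s (u t)) R j} \<le> m_wu d s \<epsilon> Twu R)
       \<and> Linf \<ge> real (m_wu d s \<epsilon> Twu R) * delta s (m_wu d s \<epsilon> Twu R) R
               + (\<Sum>j\<in>{m_wu d s \<epsilon> Twu R + 1..d}. s j)"
proof -
  \<comment> \<open>The ordering of the variances is used only to get their positivity.\<close>
  have s_pos': "0 < s j" if "j \<in> {1..d}" for j
    using that s_pos s_decr[of j d] by (cases "j = d") auto
  have warm_up: "v Twu j = u Twu j" "(u Twu j)\<^sup>2 = gact \<epsilon> s Twu j" if "j \<in> {1..d}" for j
    using plain_ae_warm_up[OF warm_u[OF that] warm_v[OF that] init_u[OF that] init_v[OF that] eps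
        _ Twu] s_pos'[OF that] by simp_all
  interpret rd_ae_flow d s R Twu u v
  proof
    show "0 < (u Twu j)\<^sup>2" "(u Twu j)\<^sup>2 < 1" if "j \<in> {1..d}" for j
      using warm_up(2)[OF that] gact_bounds[OF eps] by simp_all
  qed (use s_pos' R_pos rd_u rd_v warm_up(1) in simp_all)
  define m where "m = m_wu d s \<epsilon> Twu R"
  have m: "1 \<le> m" "m \<le> d"
    using m_wu_bounds[OF d_pos R_pos] by (simp_all add: m_def)
  have inactive: "\<not> active d (lat_var s (u Twu)) R j" if "j \<in> {1..d}" "m < j" for j
  proof (rule not_active_if_m_wu_less[where T = Twu and \<epsilon> = \<epsilon>])
    show "lat_var s (u Twu) i = s i * gact \<epsilon> s Twu i" if "i \<in> {1..d}" for i
      using warm_up(2)[OF that] by (simp add: lat_var_def)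
  qed (use R_pos lat_var_pos that in \<open>auto simp: m_def\<close>)
  have "\<forall>\<^sub>F t in at_top. card {j \<in> {1..d}. active d (lat_var s (u t)) R j} \<le> m"
    using eventually_ge_at_top[of Twu] by (rule eventually_mono) (rule card_active_le[OF inactive])
  moreover have "\<forall>\<^sub>F t in at_top. real m * delta s m R + (\<Sum>j\<in>{m+1..d}. s j) \<le> Lrec d s R (u t) (v t)"
    using eventually_ge_at_top[of Twu] by (rule eventually_mono) (rule Lrec_ge[OF inactive m])
  then have "real m * delta s m R + (\<Sum>j\<in>{m+1..d}. s j) \<le> Linf"
    by (rule tendsto_lowerbound[OF conv]) simp
  ultimately show ?thesis by (simp add: m_def)
qed

end
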